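(* For any connected graph $G$ of order $n\ge 3$, $3\le \gamma_{qtR}(G)\le n$. Moreover: (i) $\gamma_{qtR}(G)=3$ if and only if $G$ has maximum degree $n-1$; (ii) $\gamma_{qtR}(G)=4$ if and only if $\gamma(G)=\gamma_t(G)=2$; (iii) $\gamma_{qtR}(G)=n$ if and only if $G$ is a path or a cycle of order at least three.
   Context: All graphs are finite, simple and undirected; $\gamma(G)$ is the domination number and $\gamma_t(G)$ the total domination number (minimum size of a set $S$ such that every vertex has a neighbor in $S$). For $f:V(G)\to\{0,1,2\}$ write $V_i=\{v:f(v)=i\}$; weight $\omega(f)=|V_1|+2|V_2|$. A quasi-total Roman dominating function (QTRDF) is an $f$ such that every vertex labeled $0$ is adjacent to a vertex labeled $2$, and every vertex isolated in the subgraph induced by $V_1\cup V_2$ has label $1$; $\gamma_{qtR}(G)$ is the minimum weight of a QTRDF. *)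

theory Defs
  imports Main
begin

definition graph :: "'a set \<Rightarrow> ('a \<Rightarrow> 'a \<Rightarrow> bool) \<Rightarrow> bool" where
  "graph V E \<longleftrightarrow> finite V \<and>
     (\<forall>x y. E x y \<longrightarrow> x \<in> V \<and> y \<in> V \<and> x \<noteq> y \<and> E y x)"

definition connected_graph :: "'a set \<Rightarrow> ('a \<Rightarrow> 'a \<Rightarrow> bool) \<Rightarrow> bool" where
  "connected_graph V E \<longleftrightarrow> (\<forall>u\<in>V. \<forall>v\<in>V. E\<^sup>*\<^sup>* u v)"

definition nbhd :: "'a set \<Rightarrow> ('a \<Rightarrow> 'a \<Rightarrow> bool) \<Rightarrow> 'a \<Rightarrow> 'a set" where
  "nbhd V E v = {u \<in> V. E v u}"

definition max_degree :: "'a set \<Rightarrow> ('a \<Rightarrow> 'a \<Rightarrow> bool) \<Rightarrow> nat" where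
  "max_degree V E = Max ((\<lambda>v. card (nbhd V E v)) ` V)"

definition dominating_set :: "'a set \<Rightarrow> ('a \<Rightarrow> 'a \<Rightarrow> bool) \<Rightarrow> 'a set \<Rightarrow> bool" where
  "dominating_set V E S \<longleftrightarrow> S \<subseteq> V \<and> (\<forall>v\<in>V. v \<in> S \<or> (\<exists>u\<in>S. E v u))"

definition domination_number :: "'a set \<Rightarrow> ('a \<Rightarrow> 'a \<Rightarrow> bool) \<Rightarrow> nat" where
  "domination_number V E = (LEAST k. \<exists>S. dominating_set V E S \<and> card S = k)"

definition total_dominating_set :: "'a set \<Rightarrow> ('a \<Rightarrow> 'a \<Rightarrow> bool) \<Rightarrow> 'a set \<Rightarrow> bool" where
  "total_dominating_set V E S \<longleftrightarrow> S \<subseteq> V \<and> (\<forall>v\<in>V. \<exists>u\<in>S. E v u)"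

definition total_domination_number :: "'a set \<Rightarrow> ('a \<Rightarrow> 'a \<Rightarrow> bool) \<Rightarrow> nat" where
  "total_domination_number V E = (LEAST k. \<exists>S. total_dominating_set V E S \<and> card S = k)"

definition qtrdf :: "'a set \<Rightarrow> ('a \<Rightarrow> 'a \<Rightarrow> bool) \<Rightarrow> ('a \<Rightarrow> nat) \<Rightarrow> bool" where
  "qtrdf V E f \<longleftrightarrow>
     (\<forall>v\<in>V. f v \<le> 2) \<and>
     (\<forall>v\<in>V. f v = 0 \<longrightarrow> (\<exists>u\<in>V. E v u \<and> f u = 2)) \<and>
     (\<forall>v\<in>V. f v \<noteq> 0 \<and> \<not> (\<exists>u\<in>V. E v u \<and> f u \<noteq> 0) \<longrightarrow> f v = 1)"

definition weight :: "'a set \<Rightarrow> ('a \<Rightarrow> nat) \<Rightarrow> nat" where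
  "weight V f = (\<Sum>v\<in>V. f v)"

definition qtR_number :: "'a set \<Rightarrow> ('a \<Rightarrow> 'a \<Rightarrow> bool) \<Rightarrow> nat" where
  "qtR_number V E = (LEAST w. \<exists>f. qtrdf V E f \<and> weight V f = w)"

definition is_path_graph :: "'a set \<Rightarrow> ('a \<Rightarrow> 'a \<Rightarrow> bool) \<Rightarrow> bool" where
  "is_path_graph V E \<longleftrightarrow> (\<exists>xs. distinct xs \<and> set xs = V \<and>
     (\<forall>u v. E u v \<longleftrightarrow> (\<exists>i. Suc i < length xs \<and> {u, v} = {xs ! i, xs ! Suc i})))"

definition is_cycle_graph :: "'a set \<Rightarrow> ('a \<Rightarrow> 'a \<Rightarrow> bool) \<Rightarrow> bool" where
  "is_cycle_graph V E \<longleftrightarrow> (\<exists>xs. distinct xs \<and> set xs = V \<and> length xs \<ge> 3 \<and>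
     (\<forall>u v. E u v \<longleftrightarrow> ((\<exists>i. Suc i < length xs \<and> {u, v} = {xs ! i, xs ! Suc i})
                        \<or> {u, v} = {last xs, hd xs})))"

end

theory Submission
  imports Defs
begin

(*
  Write V_1 and V_2 for the vertices labelled 1 and 2, so that the weight of f is
  |V_1 \<union> V_2| + |V_2|. A vertex labelled 2 is not isolated in V_1 \<union> V_2, so it comes with
  a second nonzero vertex; this gives weight at least 3, and in weights 3 and 4 it pins
  the labelling down enough to read off a universal vertex, respectively a totally
  dominating edge. Conversely a universal vertex or a totally dominating edge yield
  labellings of weight 3 and 4.

  If the maximum degree is at most 2, a vertex labelled 2 has at most one neighbour
  labelled 0, so sending each vertex labelled 0 to a neighbour labelled 2 is injective and
  the weight is at least n. If some vertex has degree at least 3, labelling it 2, two of its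
  neighbours 0 and everything else 1 has weight n - 1. Finally, a connected graph of maximum
  degree at most 2 is a path or a cycle: a longest path is closed under taking neighbours,
  hence spanning, and its only possible chord joins its two ends.
*)

lemma card_le_2_if_subset_doubleton: "A \<subseteq> {p, q} \<Longrightarrow> card A \<le> 2"
  using card_mono[of "{p, q}" A] by (cases "p = q") auto

lemma Least_card_eq_2_iff:
  assumes "P S\<^sub>0"
  shows "(LEAST k. \<exists>S. P S \<and> card S = k) = 2 \<longleftrightarrow>
     (\<exists>S. P S \<and> card S = 2) \<and> (\<forall>S. P S \<longrightarrow> 2 \<le> card S)"
proof
  assume least: "(LEAST k. \<exists>S. P S \<and> card S = k) = 2"
  have "\<exists>S. P S \<and> card S = (LEAST k. \<exists>S. P S \<and> card S = k)"
    by (rule LeastI_ex) (use assms in blast)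
  moreover have "2 \<le> card S" if "P S" for S
    using least Least_le[of "\<lambda>k. \<exists>S. P S \<and> card S = k" "card S"] that by auto
  ultimately show "(\<exists>S. P S \<and> card S = 2) \<and> (\<forall>S. P S \<longrightarrow> 2 \<le> card S)"
    using least by auto
next
  assume "(\<exists>S. P S \<and> card S = 2) \<and> (\<forall>S. P S \<longrightarrow> 2 \<le> card S)"
  then show "(LEAST k. \<exists>S. P S \<and> card S = k) = 2"
    by (intro Least_equality) auto
qed

lemma consecutive_pair_partner:
  assumes "distinct xs" "k < length xs" "Suc i < length xs"
    and "{xs ! k, y} = {xs ! i, xs ! Suc i}"
  shows "(0 < k \<and> y = xs ! (k - 1)) \<or> (Suc k < length xs \<and> y = xs ! Suc k)"
proof -
  have "(xs ! k = xs ! i \<and> y = xs ! Suc i) \<or> (xs ! k = xs ! Suc i \<and> y = xs ! i)"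
    using assms(4) by (auto simp: doubleton_eq_iff)
  then show ?thesis
    using assms(1-3) by (auto simp: nth_eq_iff_index_eq)
qed

lemma path_graph_degree_le_2:
  assumes "is_path_graph V E" "u \<in> V"
  shows "card (nbhd V E u) \<le> 2"
proof -
  obtain xs where xs: "distinct xs" "set xs = V"
    and edges: "\<And>u v. E u v \<longleftrightarrow> (\<exists>i. Suc i < length xs \<and> {u, v} = {xs ! i, xs ! Suc i})"
    using assms(1) unfolding is_path_graph_def by blast
  obtain k where k: "k < length xs" "u = xs ! k"
    using assms(2) xs(2) by (metis in_set_conv_nth)
  have "nbhd V E u \<subseteq> {xs ! (k - 1), xs ! Suc k}"
    using consecutive_pair_partner[OF xs(1) k(1)] unfolding nbhd_def edges k(2) by blast
  then show ?thesis
    by (rule card_le_2_if_subset_doubleton)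
qed

lemma closing_pair_partner:
  assumes "distinct xs" "k < length xs" "xs \<noteq> []" and "{xs ! k, y} = {last xs, hd xs}"
  shows "(k = 0 \<and> y = last xs) \<or> (Suc k = length xs \<and> y = hd xs)"
proof -
  have ends: "hd xs = xs ! 0" "last xs = xs ! (length xs - 1)"
    using assms(3) by (simp_all add: hd_conv_nth last_conv_nth)
  have "(xs ! k = last xs \<and> y = hd xs) \<or> (xs ! k = hd xs \<and> y = last xs)"
    using assms(4) by (auto simp: doubleton_eq_iff)
  moreover have "xs ! k = hd xs \<Longrightarrow> k = 0" "xs ! k = last xs \<Longrightarrow> k = length xs - 1"
    using nth_eq_iff_index_eq[OF assms(1,2), of 0] nth_eq_iff_index_eq[OF assms(1,2), of "length xs - 1"]
      assms(3) unfolding ends by simp_all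
  ultimately show ?thesis
    using assms(2) by auto
qed

lemma cycle_graph_degree_le_2:
  assumes "is_cycle_graph V E" "u \<in> V"
  shows "card (nbhd V E u) \<le> 2"
proof -
  obtain xs where xs: "distinct xs" "set xs = V" "length xs \<ge> 3"
    and edges: "\<And>u v. E u v \<longleftrightarrow> (\<exists>i. Suc i < length xs \<and> {u, v} = {xs ! i, xs ! Suc i})
                                   \<or> {u, v} = {last xs, hd xs}"
    using assms(1) unfolding is_cycle_graph_def by blast
  obtain k where k: "k < length xs" "u = xs ! k"
    using assms(2) xs(2) by (metis in_set_conv_nth)
  have "xs \<noteq> []"
    using xs(3) by auto
  then have "nbhd V E u \<subseteq> {if k = 0 then last xs else xs ! (k - 1),
                              if Suc k = length xs then hd xs else xs ! Suc k}"
    using consecutive_pair_partner[OF xs(1) k(1)] closing_pair_partner[OF xs(1) k(1)] xs(3)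
    unfolding nbhd_def edges k(2) by auto
  then show ?thesis
    by (rule card_le_2_if_subset_doubleton)
qed

lemma qtrdf_zeroD: "qtrdf V E f \<Longrightarrow> v \<in> V \<Longrightarrow> f v = 0 \<Longrightarrow> \<exists>u\<in>V. E v u \<and> f u = 2"
  unfolding qtrdf_def by blast

lemma qtrdf_twoD: "qtrdf V E f \<Longrightarrow> v \<in> V \<Longrightarrow> f v = 2 \<Longrightarrow> \<exists>u\<in>V. E v u \<and> f u \<noteq> 0"
  unfolding qtrdf_def by force

lemma qtrdf_zero_adjacent_unique_two:
  assumes "qtrdf V E f" "{v \<in> V. f v = 2} = {t}" "x \<in> V" "f x = 0"
  shows "E x t"
proof -
  obtain u where "u \<in> V" "E x u" "f u = 2"
    using qtrdf_zeroD[OF assms(1,3,4)] by blast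
  moreover from this have "u = t"
    using assms(2) by blast
  ultimately show ?thesis
    by simp
qed

lemma qtrdf_const_1: "qtrdf V E (\<lambda>_. 1)"
  unfolding qtrdf_def by auto

lemma qtR_number_le_weight: "qtrdf V E f \<Longrightarrow> qtR_number V E \<le> weight V f"
  unfolding qtR_number_def by (rule Least_le) auto

lemma qtR_number_attained: "\<exists>f. qtrdf V E f \<and> weight V f = qtR_number V E"
  unfolding qtR_number_def by (rule LeastI_ex) (use qtrdf_const_1 in auto)

lemma qtR_number_le_card: "qtR_number V E \<le> card V"
  using qtR_number_le_weight[OF qtrdf_const_1] by (simp add: weight_def)

lemma card_nonzero_plus_card_zero:
  "finite V \<Longrightarrow> card {v \<in> V. f v \<noteq> 0} + card {v \<in> V. f v = 0} = card V"
  by (subst card_Un_disjoint[symmetric]) (auto intro: arg_cong[where f = card])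

lemma weight_qtrdf:
  assumes "finite V" "qtrdf V E f"
  shows "weight V f = card {v \<in> V. f v \<noteq> 0} + card {v \<in> V. f v = 2}"
proof -
  have "weight V f = (\<Sum>v\<in>V. (if f v \<noteq> 0 then 1 else 0) + (if f v = 2 then 1 else 0))"
    unfolding weight_def using assms(2) unfolding qtrdf_def by (intro sum.cong) fastforce+
  also have "\<dots> = card {v \<in> V. f v \<noteq> 0} + card {v \<in> V. f v = 2}"
    using assms(1) by (simp add: sum.distrib sum.inter_filter[symmetric])
  finally show ?thesis .
qed

lemma weight_qtrdf_without_two:
  assumes "finite V" "qtrdf V E f" "{v \<in> V. f v = 2} = {}"
  shows "weight V f = card V"
proof -
  have "{v \<in> V. f v = 0} = {}"
    using qtrdf_zeroD[OF assms(2)] assms(3) by blast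
  then have "card {v \<in> V. f v \<noteq> 0} = card V"
    using card_nonzero_plus_card_zero[OF assms(1), of f] by (simp only: card.empty add_0_right)
  then show ?thesis
    using weight_qtrdf[OF assms(1,2)] assms(3) by simp
qed

locale simple_graph =
  fixes V :: "'a set" and E :: "'a \<Rightarrow> 'a \<Rightarrow> bool"
  assumes graph: "graph V E"
begin

lemma finite_V: "finite V"
  using graph unfolding graph_def by auto

lemma edge_in_V: "E x y \<Longrightarrow> x \<in> V \<and> y \<in> V \<and> x \<noteq> y"
  using graph unfolding graph_def by auto

lemma edge_sym: "E x y \<Longrightarrow> E y x"
  using graph unfolding graph_def by auto

lemma nbhd_subset: "nbhd V E v \<subseteq> V - {v}"
  unfolding nbhd_def using edge_in_V by auto

lemma finite_nbhd: "finite (nbhd V E v)"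
  using nbhd_subset finite_V by (meson finite_Diff finite_subset)

lemma degree_le: "v \<in> V \<Longrightarrow> card (nbhd V E v) \<le> card V - 1"
  using card_mono[OF finite_Diff[OF finite_V] nbhd_subset[of v]] by (simp add: card_Diff_singleton)

definition universal :: "'a \<Rightarrow> bool" where
  "universal v \<longleftrightarrow> v \<in> V \<and> (\<forall>u\<in>V. u \<noteq> v \<longrightarrow> E v u)"

lemma universal_iff_degree:
  assumes "v \<in> V"
  shows "universal v \<longleftrightarrow> card (nbhd V E v) = card V - 1"
proof -
  have "universal v \<longleftrightarrow> V - {v} \<subseteq> nbhd V E v"
    using assms unfolding universal_def nbhd_def by blast
  also have "\<dots> \<longleftrightarrow> nbhd V E v = V - {v}"
    using nbhd_subset by blast
  also have "\<dots> \<longleftrightarrow> card (nbhd V E v) = card (V - {v})"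
  proof
    assume "card (nbhd V E v) = card (V - {v})"
    then show "nbhd V E v = V - {v}"
      by (rule card_subset_eq[OF finite_Diff[OF finite_V] nbhd_subset])
  qed simp
  also have "card (V - {v}) = card V - 1"
    using assms by (rule card_Diff_singleton)
  finally show ?thesis .
qed

lemma max_degree_eq_iff_universal:
  assumes "V \<noteq> {}"
  shows "max_degree V E = card V - 1 \<longleftrightarrow> (\<exists>v. universal v)"
proof -
  let ?degrees = "(\<lambda>v. card (nbhd V E v)) ` V"
  have "max_degree V E \<in> ?degrees"
    unfolding max_degree_def using finite_V assms by (intro Max_in) auto
  then obtain w where w: "w \<in> V" "max_degree V E = card (nbhd V E w)"
    by blast
  have max_ge: "card (nbhd V E v) \<le> max_degree V E" if "v \<in> V" for v
    unfolding max_degree_def using finite_V that by (intro Max_ge) auto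
  have "max_degree V E = card V - 1 \<longleftrightarrow> (\<exists>v\<in>V. card (nbhd V E v) = card V - 1)"
  proof
    assume "\<exists>v\<in>V. card (nbhd V E v) = card V - 1"
    then show "max_degree V E = card V - 1"
      using max_ge degree_le[OF w(1)] w(2) by fastforce
  qed (use w in auto)
  also have "\<dots> \<longleftrightarrow> (\<exists>v. universal v)"
    by (meson universal_def universal_iff_degree)
  finally show ?thesis .
qed

lemma universal_iff_dominating_set_card_lt_2:
  assumes "V \<noteq> {}"
  shows "(\<exists>v. universal v) \<longleftrightarrow> (\<exists>S. dominating_set V E S \<and> card S < 2)"
proof
  assume "\<exists>v. universal v"
  then obtain v where "universal v" ..
  then have "dominating_set V E {v}"
    unfolding universal_def dominating_set_def using edge_sym by blast
  then show "\<exists>S. dominating_set V E S \<and> card S < 2"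
    by (intro exI[of _ "{v}"]) simp
next
  assume "\<exists>S. dominating_set V E S \<and> card S < 2"
  then obtain S where S: "dominating_set V E S" "card S < 2"
    by blast
  then have "finite S" "S \<noteq> {}"
    using assms finite_V finite_subset unfolding dominating_set_def by auto
  then have "card S = 1"
    using S(2) by (simp add: less_2_cases_iff)
  then obtain s where "S = {s}"
    by (rule card_1_singletonE)
  then have "universal s"
    using S(1) edge_sym unfolding universal_def dominating_set_def by blast
  then show "\<exists>v. universal v" ..
qed

lemma total_dominating_set_card_ge_2:
  assumes "V \<noteq> {}" "total_dominating_set V E S"
  shows "2 \<le> card S"
proof -
  obtain v where "v \<in> V"
    using assms(1) by blast
  then obtain u where u: "u \<in> S" "E v u"
    using assms(2) unfolding total_dominating_set_def by blast
  then obtain w where w: "w \<in> S" "E u w"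
    using assms(2) edge_in_V unfolding total_dominating_set_def by blast
  have "finite S"
    using assms(2) finite_V finite_subset unfolding total_dominating_set_def by auto
  then have "card {u, w} \<le> card S"
    using u w by (intro card_mono) auto
  then show ?thesis
    using w edge_in_V by auto
qed

lemma domination_numbers_eq_2_iff:
  assumes "V \<noteq> {}" and "total_dominating_set V E V"
  shows "domination_number V E = 2 \<and> total_domination_number V E = 2 \<longleftrightarrow>
    \<not> (\<exists>v. universal v) \<and> (\<exists>S. total_dominating_set V E S \<and> card S = 2)"
proof -
  have "dominating_set V E V"
    unfolding dominating_set_def by blast
  then have "domination_number V E = 2 \<longleftrightarrow>
      (\<exists>S. dominating_set V E S \<and> card S = 2) \<and> (\<forall>S. dominating_set V E S \<longrightarrow> 2 \<le> card S)"
    unfolding domination_number_def by (rule Least_card_eq_2_iff)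
  moreover have "(\<forall>S. dominating_set V E S \<longrightarrow> 2 \<le> card S) \<longleftrightarrow> \<not> (\<exists>v. universal v)"
    using universal_iff_dominating_set_card_lt_2[OF assms(1)] not_less by blast
  moreover have "total_domination_number V E = 2 \<longleftrightarrow> (\<exists>S. total_dominating_set V E S \<and> card S = 2)"
    unfolding total_domination_number_def Least_card_eq_2_iff[of "total_dominating_set V E", OF assms(2)]
    using total_dominating_set_card_ge_2[OF assms(1)] by blast
  moreover have "total_dominating_set V E S \<Longrightarrow> dominating_set V E S" for S
    unfolding total_dominating_set_def dominating_set_def by blast
  ultimately show ?thesis
    by blast
qed

lemma total_dominating_pair:
  assumes "E a b" "\<forall>v\<in>V. E v a \<or> E v b"
  shows "\<exists>S. total_dominating_set V E S \<and> card S = 2"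
proof
  show "total_dominating_set V E {a, b} \<and> card {a, b} = 2"
    using assms edge_in_V unfolding total_dominating_set_def by auto
qed

lemma qtR_number_le_4_if_total_dominating_pair:
  assumes "total_dominating_set V E S" "card S = 2"
  shows "qtR_number V E \<le> 4"
proof -
  obtain a b where S: "S = {a, b}" "a \<noteq> b"
    using assms(2) by (auto simp: card_2_iff)
  have in_V: "a \<in> V" "b \<in> V" and dominates: "\<forall>v\<in>V. E v a \<or> E v b"
    using assms(1) unfolding S total_dominating_set_def by auto
  then have "E a b"
    using edge_in_V by blast
  define f where "f x = (if x = a \<or> x = b then 2 else 0 :: nat)" for x
  have "qtrdf V E f"
    unfolding qtrdf_def
  proof (intro conjI ballI impI)
    fix x assume "x \<in> V" "f x = 0"
    then show "\<exists>u\<in>V. E x u \<and> f u = 2"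
      using dominates in_V unfolding f_def by auto
  next
    fix x assume "x \<in> V" "f x \<noteq> 0 \<and> \<not> (\<exists>u\<in>V. E x u \<and> f u \<noteq> 0)"
    then show "f x = 1"
      using in_V \<open>E a b\<close> edge_sym unfolding f_def by (auto split: if_splits)
  qed (simp add: f_def)
  have "{x \<in> V. f x \<noteq> 0} = {a, b}" "{x \<in> V. f x = 2} = {a, b}"
    using in_V unfolding f_def by auto
  then have "weight V f = 4"
    using weight_qtrdf[OF finite_V \<open>qtrdf V E f\<close>] S(2) by simp
  then show ?thesis
    using qtR_number_le_weight[OF \<open>qtrdf V E f\<close>] by simp
qed

lemma weight_ge_card_if_degree_le_2:
  assumes degree: "\<forall>v\<in>V. card (nbhd V E v) \<le> 2" and f: "qtrdf V E f"
  shows "card V \<le> weight V f"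
proof -
  define Z where "Z = {v \<in> V. f v = 0}"
  define T where "T = {v \<in> V. f v = 2}"
  define g where "g z = (SOME t. t \<in> V \<and> E z t \<and> f t = 2)" for z
  have g: "g z \<in> T \<and> E z (g z)" if "z \<in> Z" for z
    using someI_ex[OF qtrdf_zeroD[OF f, of z, unfolded Bex_def]] that
    unfolding g_def Z_def T_def by auto
  \<comment> \<open>A vertex labelled 2 has a nonzero neighbour, so at most one neighbour labelled 0.\<close>
  have "inj_on g Z"
  proof (rule inj_onI, rule ccontr)
    fix z1 z2 assume z: "z1 \<in> Z" "z2 \<in> Z" "g z1 = g z2" "z1 \<noteq> z2"
    let ?t = "g z1"
    have t: "?t \<in> V" "f ?t = 2" "E ?t z1" "E ?t z2"
      using g[OF z(1)] g[OF z(2)] z(3) edge_sym unfolding T_def by auto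
    obtain w where w: "w \<in> V" "E ?t w" "f w \<noteq> 0"
      using qtrdf_twoD[OF f t(1,2)] by blast
    have "{z1, z2, w} \<subseteq> nbhd V E ?t"
      using t w edge_in_V unfolding nbhd_def by blast
    moreover have "w \<noteq> z1" "w \<noteq> z2"
      using z w unfolding Z_def by auto
    then have "card {z1, z2, w} = 3"
      using z(4) by simp
    moreover have "card (nbhd V E ?t) \<le> 2"
      using degree t(1) by blast
    ultimately show False
      using card_mono[OF finite_nbhd, of "{z1, z2, w}" ?t] by simp
  qed
  moreover have "g ` Z \<subseteq> T"
    using g by auto
  ultimately have "card Z \<le> card T"
    using finite_V unfolding T_def by (intro card_inj_on_le) auto
  then show ?thesis
    using weight_qtrdf[OF finite_V f] card_nonzero_plus_card_zero[OF finite_V, of f]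
    unfolding Z_def T_def by linarith
qed

lemma qtR_number_lt_card_if_degree_ge_3:
  assumes "v \<in> V" "3 \<le> card (nbhd V E v)"
  shows "qtR_number V E < card V"
proof -
  obtain S where "S \<subseteq> nbhd V E v" "card S = 3"
    using assms(2) obtain_subset_with_card_n by metis
  then obtain a b c where abc: "{a, b, c} \<subseteq> nbhd V E v" "a \<noteq> b" "b \<noteq> c" "a \<noteq> c"
    by (auto simp: card_3_iff)
  then have nbrs: "a \<in> V" "b \<in> V" "c \<in> V" "E v a" "E v b" "E v c"
      "a \<noteq> v" "b \<noteq> v" "c \<noteq> v"
    using edge_in_V unfolding nbhd_def by auto
  define f where "f x = (if x = v then 2 else if x = a \<or> x = b then 0 else 1 :: nat)" for x
  have "qtrdf V E f"
    unfolding qtrdf_def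
  proof (intro conjI ballI impI)
    fix x assume x: "x \<in> V" "f x \<noteq> 0 \<and> \<not> (\<exists>u\<in>V. E x u \<and> f u \<noteq> 0)"
    have "f c = 1"
      using nbrs(9) abc unfolding f_def by auto
    then have "x \<noteq> v"
      using x nbrs(3,6) by auto
    then show "f x = 1"
      using x(2) unfolding f_def by auto
  next
    fix x assume "x \<in> V" "f x = 0"
    then have "x = a \<or> x = b"
      unfolding f_def by (auto split: if_splits)
    then have "E x v"
      using nbrs(4,5) edge_sym by blast
    then show "\<exists>u\<in>V. E x u \<and> f u = 2"
      using assms(1) unfolding f_def by auto
  qed (simp add: f_def)
  moreover have "{x \<in> V. f x \<noteq> 0} = V - {a, b}" "{x \<in> V. f x = 2} = {v}"
    using assms(1) nbrs(7,8) unfolding f_def by auto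
  moreover have "card (V - {a, b}) = card V - 2"
    using nbrs(1,2) abc(2) finite_V by (simp add: card_Diff_subset)
  moreover have "4 \<le> card V"
    using assms degree_le[of v] by linarith
  ultimately have "weight V f < card V"
    using weight_qtrdf[OF finite_V] by simp
  then show ?thesis
    using qtR_number_le_weight[OF \<open>qtrdf V E f\<close>] by linarith
qed

lemma qtrdf_two_partner:
  assumes f: "qtrdf V E f" and t: "t \<in> V" "f t = 2"
  obtains u where "u \<in> V" "E t u" "f u \<noteq> 0" "t \<noteq> u"
    and "2 \<le> card {v \<in> V. f v \<noteq> 0}" "1 \<le> card {v \<in> V. f v = 2}"
proof -
  obtain u where u: "u \<in> V" "E t u" "f u \<noteq> 0"
    using qtrdf_twoD[OF f t] by blast
  moreover have "t \<noteq> u"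
    using u edge_in_V by blast
  moreover have "card {t, u} \<le> card {v \<in> V. f v \<noteq> 0}" "card {t} \<le> card {v \<in> V. f v = 2}"
    using t u finite_V by (intro card_mono; auto)+
  ultimately show ?thesis
    using that by simp
qed

lemma total_dominating_set_if_no_one:
  assumes f: "qtrdf V E f" and no_one: "\<forall>v\<in>V. f v \<noteq> 0 \<longrightarrow> f v = 2"
  shows "total_dominating_set V E {v \<in> V. f v = 2}"
  unfolding total_dominating_set_def
proof (intro conjI ballI)
  fix x assume x: "x \<in> V"
  show "\<exists>y\<in>{v \<in> V. f v = 2}. E x y"
  proof (cases "f x = 0")
    case True
    then show ?thesis
      using qtrdf_zeroD[OF f x] by blast
  next
    case False
    then obtain y where "y \<in> V" "E x y" "f y \<noteq> 0"
      using qtrdf_twoD[OF f x] no_one x by blast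
    then show ?thesis
      using no_one by blast
  qed
qed blast

definition graph_path :: "'a list \<Rightarrow> bool" where
  "graph_path xs \<longleftrightarrow> distinct xs \<and> set xs \<subseteq> V \<and> (\<forall>i. Suc i < length xs \<longrightarrow> E (xs ! i) (xs ! Suc i))"

lemma graph_path_length_le: "graph_path xs \<Longrightarrow> length xs \<le> card V"
  unfolding graph_path_def using finite_V by (metis card_mono distinct_card)

lemma graph_path_rev:
  assumes "graph_path xs"
  shows "graph_path (rev xs)"
  unfolding graph_path_def
proof (intro conjI allI impI)
  fix i assume i: "Suc i < length (rev xs)"
  define j where "j = length xs - Suc (Suc i)"
  have j: "Suc j < length xs" "Suc j = length xs - Suc i"
    using i unfolding j_def by auto
  then have "E (xs ! j) (xs ! Suc j)"
    using assms unfolding graph_path_def by blast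
  then show "E (rev xs ! i) (rev xs ! Suc i)"
    using i j edge_sym unfolding j_def by (simp add: rev_nth)
qed (use assms in \<open>auto simp: graph_path_def\<close>)

lemma graph_path_Cons:
  assumes "graph_path xs" "xs \<noteq> []" "E y (hd xs)" "y \<notin> set xs"
  shows "graph_path (y # xs)"
  unfolding graph_path_def
proof (intro conjI allI impI)
  fix i assume "Suc i < length (y # xs)"
  then show "E ((y # xs) ! i) ((y # xs) ! Suc i)"
    using assms unfolding graph_path_def by (cases i) (auto simp: hd_conv_nth)
qed (use assms edge_in_V in \<open>auto simp: graph_path_def\<close>)

lemma longest_graph_path_exists:
  assumes "V \<noteq> {}"
  shows "\<exists>xs. graph_path xs \<and> xs \<noteq> [] \<and> (\<forall>ys. graph_path ys \<longrightarrow> length ys \<le> length xs)"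
proof -
  obtain v where "v \<in> V"
    using assms by blast
  then have "graph_path [v]"
    unfolding graph_path_def by simp
  then obtain xs where "graph_path xs" "\<forall>ys. graph_path ys \<longrightarrow> length ys \<le> length xs"
    using ex_has_greatest_nat[of graph_path "[v]" length "Suc (card V)"] graph_path_length_le
    by (metis less_Suc_eq_le)
  moreover from this have "xs \<noteq> []"
    using \<open>graph_path [v]\<close> by fastforce
  ultimately show ?thesis
    by blast
qed

lemma longest_graph_path_hd_nbhd:
  assumes "graph_path xs" "xs \<noteq> []" "\<And>ys. graph_path ys \<Longrightarrow> length ys \<le> length xs"
    and "E (hd xs) y"
  shows "y \<in> set xs"
proof (rule ccontr)
  assume "y \<notin> set xs"
  then have "graph_path (y # xs)"
    using assms(1,2,4) edge_sym by (intro graph_path_Cons) auto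
  then show False
    using assms(3) by fastforce
qed

lemma longest_graph_path_last_nbhd:
  assumes "graph_path xs" "xs \<noteq> []" "\<And>ys. graph_path ys \<Longrightarrow> length ys \<le> length xs"
    and "E (last xs) y"
  shows "y \<in> set xs"
  using longest_graph_path_hd_nbhd[of "rev xs" y] graph_path_rev assms by (simp add: hd_rev)

lemma graph_path_inner_nbhd:
  assumes degree: "\<forall>v\<in>V. card (nbhd V E v) \<le> 2"
    and xs: "graph_path xs" and i: "0 < i" "Suc i < length xs" and "E (xs ! i) y"
  shows "y = xs ! (i - 1) \<or> y = xs ! Suc i"
proof (rule ccontr)
  assume y: "\<not> (y = xs ! (i - 1) \<or> y = xs ! Suc i)"
  have step: "E (xs ! k) (xs ! Suc k)" if "Suc k < length xs" for k
    using xs that unfolding graph_path_def by blast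
  have "E (xs ! (i - 1)) (xs ! i)" "E (xs ! i) (xs ! Suc i)"
    using step[of "i - 1"] step[of i] i by simp_all
  then have "{xs ! (i - 1), xs ! Suc i, y} \<subseteq> nbhd V E (xs ! i)"
    using \<open>E (xs ! i) y\<close> edge_sym edge_in_V unfolding nbhd_def by blast
  moreover have "xs ! (i - 1) \<noteq> xs ! Suc i"
    using xs i unfolding graph_path_def by (simp add: nth_eq_iff_index_eq)
  then have "card {xs ! (i - 1), xs ! Suc i, y} = 3"
    using y by auto
  moreover have "card (nbhd V E (xs ! i)) \<le> 2"
    using degree \<open>E (xs ! i) (xs ! Suc i)\<close> edge_in_V by blast
  ultimately show False
    using card_mono[OF finite_nbhd, of "{xs ! (i - 1), xs ! Suc i, y}" "xs ! i"] by simp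
qed

lemma graph_path_edge_indices:
  assumes degree: "\<forall>v\<in>V. card (nbhd V E v) \<le> 2"
    and xs: "graph_path xs" and ij: "i < j" "j < length xs" and e: "E (xs ! i) (xs ! j)"
  shows "j = Suc i \<or> (i = 0 \<and> j = length xs - 1)"
proof (rule ccontr)
  assume "\<not> (j = Suc i \<or> (i = 0 \<and> j = length xs - 1))"
  then have far: "Suc i < j" and "0 < i \<or> Suc j < length xs"
    using ij by auto
  have dist: "distinct xs"
    using xs unfolding graph_path_def by blast
  from \<open>0 < i \<or> Suc j < length xs\<close> show False
  proof
    assume "0 < i"
    then have "xs ! j = xs ! (i - 1) \<or> xs ! j = xs ! Suc i"
      using graph_path_inner_nbhd[OF degree xs] e far ij(2) by simp
    then show False
      using dist ij far by (auto simp: nth_eq_iff_index_eq)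
  next
    assume "Suc j < length xs"
    then have "xs ! i = xs ! (j - 1) \<or> xs ! i = xs ! Suc j"
      using graph_path_inner_nbhd[OF degree xs] edge_sym[OF e] ij(1) by simp
    then show False
      using dist ij far \<open>Suc j < length xs\<close> by (auto simp: nth_eq_iff_index_eq)
  qed
qed

lemma edge_iff_along_spanning_path:
  assumes degree: "\<forall>v\<in>V. card (nbhd V E v) \<le> 2"
    and xs: "graph_path xs" "set xs = V"
  shows "E u v \<longleftrightarrow> (\<exists>i. Suc i < length xs \<and> {u, v} = {xs ! i, xs ! Suc i})
                    \<or> ({u, v} = {last xs, hd xs} \<and> E (hd xs) (last xs))"
    (is "_ \<longleftrightarrow> ?along u v")
proof
  have ordered: "?along (xs ! i) (xs ! j)" if "i < j" "j < length xs" "E (xs ! i) (xs ! j)" for i j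
  proof -
    have "xs \<noteq> []"
      using that by auto
    then show ?thesis
      using graph_path_edge_indices[OF degree xs(1) that] that
      by (auto simp: hd_conv_nth last_conv_nth)
  qed
  assume "E u v"
  then obtain i j where "i < length xs" "j < length xs" "u = xs ! i" "v = xs ! j"
    using edge_in_V xs(2) by (metis in_set_conv_nth)
  then show "?along u v"
    using ordered[of i j] ordered[of j i] \<open>E u v\<close> edge_sym edge_in_V
    by (cases i j rule: linorder_cases) (auto simp: insert_commute)
next
  assume "?along u v"
  then show "E u v"
    using xs(1) edge_sym unfolding graph_path_def by (auto simp: doubleton_eq_iff)
qed

end

locale connected_simple_graph = simple_graph +
  assumes connected: "connected_graph V E" and card_ge_3: "3 \<le> card V"
begin

lemma V_nonempty: "V \<noteq> {}"
  using card_ge_3 by auto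

lemma closed_subset_eq_V:
  assumes "S \<subseteq> V" "x \<in> S" "\<forall>u\<in>S. \<forall>y. E u y \<longrightarrow> y \<in> S"
  shows "S = V"
proof -
  have "v \<in> S" if "v \<in> V" for v
  proof -
    have "E\<^sup>*\<^sup>* x v"
      using connected assms(1,2) that unfolding connected_graph_def by auto
    then show ?thesis
      by (induction rule: rtranclp_induct) (use assms(2,3) in auto)
  qed
  then show ?thesis
    using assms(1) by auto
qed

lemma has_neighbour:
  assumes "v \<in> V"
  obtains u where "E v u"
proof -
  have "{v} \<noteq> V"
    using card_ge_3 by auto
  then show ?thesis
    using closed_subset_eq_V[of "{v}" v] assms that by blast
qed

lemma total_dominating_set_V: "total_dominating_set V E V"
  unfolding total_dominating_set_def
proof (intro conjI ballI subset_refl)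
  fix v assume "v \<in> V"
  then obtain u where "E v u"
    by (rule has_neighbour)
  then show "\<exists>u\<in>V. E v u"
    using edge_in_V by blast
qed

lemma qtR_number_ge_3: "3 \<le> qtR_number V E"
proof -
  obtain f where f: "qtrdf V E f" "weight V f = qtR_number V E"
    using qtR_number_attained by blast
  show ?thesis
  proof (cases "{v \<in> V. f v = 2} = {}")
    case True
    then show ?thesis
      using f card_ge_3 weight_qtrdf_without_two[OF finite_V f(1)] by simp
  next
    case False
    then obtain t where t: "t \<in> V" "f t = 2"
      by blast
    obtain u where "2 \<le> card {v \<in> V. f v \<noteq> 0}" "1 \<le> card {v \<in> V. f v = 2}"
      by (rule qtrdf_two_partner[OF f(1) t])
    then show ?thesis
      using f weight_qtrdf[OF finite_V f(1)] by simp
  qed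
qed

lemma obtain_two_neighbours:
  obtains t x y where "E t x" "E t y" "x \<noteq> y"
proof -
  obtain a where a: "a \<in> V"
    using V_nonempty by blast
  then obtain b where ab: "E a b"
    by (rule has_neighbour)
  have "{a, b} \<noteq> V"
    using card_ge_3 card_le_2_if_subset_doubleton[of V a b] by auto
  then obtain u y where "u \<in> {a, b}" "E u y" "y \<notin> {a, b}"
    using closed_subset_eq_V[of "{a, b}" a] ab edge_in_V by blast
  then show ?thesis
    using that ab edge_sym by blast
qed

lemma universal_if_card_3:
  assumes "card V = 3"
  shows "\<exists>v. universal v"
proof -
  obtain t x y where t: "E t x" "E t y" "x \<noteq> y"
    by (rule obtain_two_neighbours)
  then have "{t, x, y} \<subseteq> V" "card {t, x, y} = 3"
    using edge_in_V by auto
  then have "V = {t, x, y}"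
    using assms finite_V by (metis card_subset_eq)
  then have "universal t"
    using t edge_in_V unfolding universal_def by blast
  then show ?thesis ..
qed

lemma total_dominating_pair_if_adjacent_to_all_but_one:
  assumes "t \<in> V" "\<forall>v\<in>V. v \<noteq> t \<and> v \<noteq> w \<longrightarrow> E v t"
  shows "\<exists>S. total_dominating_set V E S \<and> card S = 2"
proof (cases "w \<in> V \<and> \<not> E w t")
  case True
  then obtain x where "E w x"
    using has_neighbour by blast
  moreover from this have "x \<in> V" "x \<noteq> w" "x \<noteq> t"
    using True edge_in_V by auto
  then have "E x t"
    using assms(2) by blast
  ultimately show ?thesis
    using assms(2) edge_sym by (intro total_dominating_pair[of t x]) auto
next
  case False
  obtain x where "E t x"
    using assms(1) by (rule has_neighbour)
  then show ?thesis
    using False assms(2) by (intro total_dominating_pair[of t x]) auto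
qed

lemma total_dominating_pair_if_card_4:
  assumes "card V = 4"
  shows "\<exists>S. total_dominating_set V E S \<and> card S = 2"
proof -
  obtain t x y where t: "E t x" "E t y" "x \<noteq> y"
    by (rule obtain_two_neighbours)
  then have "{t, x, y} \<subseteq> V" "card {t, x, y} = 3"
    using edge_in_V by auto
  then have "card (V - {t, x, y}) = 1"
    using assms finite_V by (simp add: card_Diff_subset)
  then obtain w where "V - {t, x, y} = {w}"
    by (rule card_1_singletonE)
  then have "\<forall>v\<in>V. v \<noteq> t \<and> v \<noteq> w \<longrightarrow> E v t"
    using t edge_sym by blast
  then show ?thesis
    using t edge_in_V total_dominating_pair_if_adjacent_to_all_but_one by blast
qed

lemma qtR_number_eq_3_if_universal:
  assumes "universal v"
  shows "qtR_number V E = 3"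
proof -
  have v: "v \<in> V" and adj: "\<And>x. x \<in> V \<Longrightarrow> x \<noteq> v \<Longrightarrow> E x v"
    using assms edge_sym unfolding universal_def by auto
  obtain u where "E v u"
    using v by (rule has_neighbour)
  then have u: "u \<in> V" "u \<noteq> v"
    using edge_in_V by auto
  define f where "f x = (if x = v then 2 else if x = u then 1 else 0 :: nat)" for x
  have "qtrdf V E f"
    unfolding qtrdf_def
  proof (intro conjI ballI impI)
    fix x assume "x \<in> V" "f x = 0"
    then have "E x v"
      using adj unfolding f_def by (auto split: if_splits)
    then show "\<exists>y\<in>V. E x y \<and> f y = 2"
      using v unfolding f_def by auto
  next
    fix x assume x: "x \<in> V" "f x \<noteq> 0 \<and> \<not> (\<exists>y\<in>V. E x y \<and> f y \<noteq> 0)"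
    have "x \<noteq> v"
      using x u \<open>E v u\<close> unfolding f_def by auto
    then show "f x = 1"
      using x(2) unfolding f_def by (auto split: if_splits)
  qed (simp add: f_def)
  moreover have "{x \<in> V. f x \<noteq> 0} = {v, u}" "{x \<in> V. f x = 2} = {v}"
    using u v unfolding f_def by auto
  ultimately have "weight V f = 3"
    using weight_qtrdf[OF finite_V] u(2) by simp
  then show ?thesis
    using qtR_number_le_weight[OF \<open>qtrdf V E f\<close>] qtR_number_ge_3 by linarith
qed

lemma universal_if_qtR_number_eq_3:
  assumes "qtR_number V E = 3"
  shows "\<exists>v. universal v"
proof -
  obtain f where f: "qtrdf V E f" "weight V f = 3"
    using qtR_number_attained assms by metis
  define NZ T where "NZ = {v \<in> V. f v \<noteq> 0}" and "T = {v \<in> V. f v = 2}"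
  have weight: "card NZ + card T = 3"
    using weight_qtrdf[OF finite_V f(1)] f(2) unfolding NZ_def T_def by simp
  show ?thesis
  proof (cases "T = {}")
    case True
    then have "card V = 3"
      using weight_qtrdf_without_two[OF finite_V f(1)] f(2) unfolding T_def by simp
    then show ?thesis
      by (rule universal_if_card_3)
  next
    case False
    then obtain t where t: "t \<in> V" "f t = 2"
      unfolding T_def by blast
    obtain u where u: "u \<in> V" "E t u" "f u \<noteq> 0" "t \<noteq> u"
      and "2 \<le> card NZ" "1 \<le> card T"
      by (rule qtrdf_two_partner[OF f(1) t, folded NZ_def T_def])
    then have "card {t, u} = card NZ" "card {t} = card T"
      using weight by simp_all
    moreover have "{t, u} \<subseteq> NZ" "{t} \<subseteq> T" "finite NZ" "finite T"
      using t u finite_V unfolding NZ_def T_def by auto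
    ultimately have "NZ = {t, u}" "T = {t}"
      using card_subset_eq by metis+
    then have "E x t" if "x \<in> V" "x \<noteq> t" "x \<noteq> u" for x
      using qtrdf_zero_adjacent_unique_two[OF f(1)] that unfolding NZ_def T_def by blast
    then have "universal t"
      using t u edge_sym unfolding universal_def by blast
    then show ?thesis ..
  qed
qed

lemma qtR_number_eq_3_iff_universal: "qtR_number V E = 3 \<longleftrightarrow> (\<exists>v. universal v)"
  using qtR_number_eq_3_if_universal universal_if_qtR_number_eq_3 by blast

lemma total_dominating_pair_if_unique_two:
  assumes f: "qtrdf V E f" and two: "{v \<in> V. f v = 2} = {t}"
    and nonzero: "card {v \<in> V. f v \<noteq> 0} = 3"
  shows "\<exists>S. total_dominating_set V E S \<and> card S = 2"
proof -
  define NZ where "NZ = {v \<in> V. f v \<noteq> 0}"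
  have t: "t \<in> V" "f t = 2"
    using two by blast+
  obtain u where u: "u \<in> V" "E t u" "f u \<noteq> 0" "t \<noteq> u"
    by (rule qtrdf_two_partner[OF f t])
  have "{t, u} \<subseteq> NZ" "finite NZ"
    using t u finite_V unfolding NZ_def by auto
  then have "card (NZ - {t, u}) = 1"
    using nonzero u(4) unfolding NZ_def by (simp add: card_Diff_subset)
  then obtain w where w: "NZ - {t, u} = {w}"
    by (rule card_1_singletonE)
  have "E v t" if "v \<in> V" "v \<noteq> t" "v \<noteq> w" for v
  proof (cases "v = u")
    case False
    then have "f v = 0"
      using that w unfolding NZ_def by blast
    then show ?thesis
      using qtrdf_zero_adjacent_unique_two[OF f two that(1)] by blast
  qed (use u edge_sym in blast)
  then show ?thesis
    using total_dominating_pair_if_adjacent_to_all_but_one[OF t(1)] by blast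
qed

lemma total_dominating_pair_if_qtR_number_eq_4:
  assumes "qtR_number V E = 4"
  shows "\<exists>S. total_dominating_set V E S \<and> card S = 2"
proof -
  obtain f where f: "qtrdf V E f" "weight V f = 4"
    using qtR_number_attained assms by metis
  define NZ T where "NZ = {v \<in> V. f v \<noteq> 0}" and "T = {v \<in> V. f v = 2}"
  have weight: "card NZ + card T = 4"
    using weight_qtrdf[OF finite_V f(1)] f(2) unfolding NZ_def T_def by simp
  have "T \<subseteq> NZ" "finite NZ"
    using finite_V unfolding NZ_def T_def by auto
  show ?thesis
  proof (cases "T = {}")
    case True
    then have "card V = 4"
      using weight_qtrdf_without_two[OF finite_V f(1)] f(2) unfolding T_def by simp
    then show ?thesis
      by (rule total_dominating_pair_if_card_4)
  next
    case False
    then obtain t where t: "t \<in> V" "f t = 2"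
      unfolding T_def by blast
    obtain u where "2 \<le> card NZ" "1 \<le> card T"
      by (rule qtrdf_two_partner[OF f(1) t, folded NZ_def T_def])
    moreover have "card T \<le> card NZ"
      using \<open>finite NZ\<close> \<open>T \<subseteq> NZ\<close> by (rule card_mono)
    ultimately consider "card T = 2" "card NZ = 2" | "card T = 1" "card NZ = 3"
      using weight by linarith
    then show ?thesis
    proof cases
      case 1
      then have "T = NZ"
        using card_subset_eq[OF \<open>finite NZ\<close> \<open>T \<subseteq> NZ\<close>] by simp
      then have "\<forall>v\<in>V. f v \<noteq> 0 \<longrightarrow> f v = 2"
        unfolding NZ_def T_def by blast
      then have "total_dominating_set V E T"
        unfolding T_def by (rule total_dominating_set_if_no_one[OF f(1)])
      then show ?thesis
        using 1 by blast
    next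
      case 2
      then obtain s where "T = {s}"
        by (meson card_1_singletonE)
      then show ?thesis
        using total_dominating_pair_if_unique_two[OF f(1)] 2 unfolding NZ_def T_def by blast
    qed
  qed
qed

lemma qtR_number_eq_4_iff:
  "qtR_number V E = 4 \<longleftrightarrow> \<not> (\<exists>v. universal v) \<and> (\<exists>S. total_dominating_set V E S \<and> card S = 2)"
proof
  assume "qtR_number V E = 4"
  then show "\<not> (\<exists>v. universal v) \<and> (\<exists>S. total_dominating_set V E S \<and> card S = 2)"
    using qtR_number_eq_3_iff_universal total_dominating_pair_if_qtR_number_eq_4 by auto
next
  assume "\<not> (\<exists>v. universal v) \<and> (\<exists>S. total_dominating_set V E S \<and> card S = 2)"
  then have "qtR_number V E \<noteq> 3" "qtR_number V E \<le> 4"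
    using qtR_number_eq_3_iff_universal qtR_number_le_4_if_total_dominating_pair by blast+
  then show "qtR_number V E = 4"
    using qtR_number_ge_3 by linarith
qed

lemma longest_graph_path_spanning:
  assumes degree: "\<forall>v\<in>V. card (nbhd V E v) \<le> 2"
    and xs: "graph_path xs" "xs \<noteq> []"
    and longest: "\<And>ys. graph_path ys \<Longrightarrow> length ys \<le> length xs"
  shows "set xs = V"
proof -
  have closed: "y \<in> set xs" if u: "u \<in> set xs" and e: "E u y" for u y
  proof -
    obtain i where i: "i < length xs" "u = xs ! i"
      using u by (metis in_set_conv_nth)
    consider "i = 0" | "i = length xs - 1" | "0 < i" "Suc i < length xs"
      using i(1) by linarith
    then show ?thesis
    proof cases
      case 1
      then show ?thesis
        using longest_graph_path_hd_nbhd[OF xs longest] e i xs(2) by (simp add: hd_conv_nth)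
    next
      case 2
      then show ?thesis
        using longest_graph_path_last_nbhd[OF xs longest] e i xs(2) by (simp add: last_conv_nth)
    next
      case 3
      then have "y = xs ! (i - 1) \<or> y = xs ! Suc i"
        using graph_path_inner_nbhd[OF degree xs(1)] e i(2) by blast
      then show ?thesis
        using 3 by auto
    qed
  qed
  have "set xs \<subseteq> V"
    using xs(1) unfolding graph_path_def by blast
  then show ?thesis
    using closed_subset_eq_V[OF _ hd_in_set[OF xs(2)]] closed by blast
qed

lemma path_or_cycle_if_degree_le_2:
  assumes degree: "\<forall>v\<in>V. card (nbhd V E v) \<le> 2"
  shows "is_path_graph V E \<or> is_cycle_graph V E"
proof -
  obtain xs where xs: "graph_path xs" "xs \<noteq> []"
    and "\<forall>ys. graph_path ys \<longrightarrow> length ys \<le> length xs"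
    using longest_graph_path_exists[OF V_nonempty] by blast
  then have spanning: "set xs = V"
    using longest_graph_path_spanning[OF degree xs] by blast
  have dist: "distinct xs"
    using xs(1) unfolding graph_path_def by blast
  then have "3 \<le> length xs"
    using card_ge_3 distinct_card[OF dist] spanning by simp
  have edges: "E u v \<longleftrightarrow> (\<exists>i. Suc i < length xs \<and> {u, v} = {xs ! i, xs ! Suc i})
      \<or> ({u, v} = {last xs, hd xs} \<and> E (hd xs) (last xs))" for u v
    by (rule edge_iff_along_spanning_path[OF degree xs(1) spanning])
  show ?thesis
  proof (cases "E (hd xs) (last xs)")
    case True
    then have "E u v \<longleftrightarrow> (\<exists>i. Suc i < length xs \<and> {u, v} = {xs ! i, xs ! Suc i})
        \<or> {u, v} = {last xs, hd xs}" for u v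
      using edges[of u v] by blast
    then have "is_cycle_graph V E"
      unfolding is_cycle_graph_def using dist spanning \<open>3 \<le> length xs\<close>
      by (intro exI[of _ xs]) simp
    then show ?thesis ..
  next
    case False
    then have "E u v \<longleftrightarrow> (\<exists>i. Suc i < length xs \<and> {u, v} = {xs ! i, xs ! Suc i})" for u v
      using edges[of u v] by blast
    then have "is_path_graph V E"
      unfolding is_path_graph_def using dist spanning by (intro exI[of _ xs]) simp
    then show ?thesis ..
  qed
qed

lemma qtR_number_eq_card_iff:
  "qtR_number V E = card V \<longleftrightarrow> is_path_graph V E \<or> is_cycle_graph V E"
proof
  assume eq: "qtR_number V E = card V"
  have "card (nbhd V E v) \<le> 2" if "v \<in> V" for v
  proof (rule ccontr)
    assume "\<not> card (nbhd V E v) \<le> 2"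
    then show False
      using qtR_number_lt_card_if_degree_ge_3[OF that] eq by simp
  qed
  then show "is_path_graph V E \<or> is_cycle_graph V E"
    using path_or_cycle_if_degree_le_2 by blast
next
  assume "is_path_graph V E \<or> is_cycle_graph V E"
  then have degree: "\<forall>v\<in>V. card (nbhd V E v) \<le> 2"
    using path_graph_degree_le_2[of V E] cycle_graph_degree_le_2[of V E] by blast
  obtain f where f: "qtrdf V E f" "weight V f = qtR_number V E"
    using qtR_number_attained by blast
  have "card V \<le> qtR_number V E"
    using weight_ge_card_if_degree_le_2[OF degree f(1)] f(2) by simp
  then show "qtR_number V E = card V"
    using qtR_number_le_card[of V E] by linarith
qed

end

theorem mainTheorem7:
  fixes V :: "'a set" and E :: "'a \<Rightarrow> 'a \<Rightarrow> bool"
  assumes "graph V E" and "connected_graph V E" and "card V \<ge> 3"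
  shows "3 \<le> qtR_number V E \<and> qtR_number V E \<le> card V
    \<and> (qtR_number V E = 3 \<longleftrightarrow> max_degree V E = card V - 1)
    \<and> (qtR_number V E = 4 \<longleftrightarrow> domination_number V E = 2 \<and> total_domination_number V E = 2)
    \<and> (qtR_number V E = card V \<longleftrightarrow> is_path_graph V E \<or> is_cycle_graph V E)"
proof -
  interpret connected_simple_graph V E
    using assms by unfold_locales
  have "qtR_number V E = 3 \<longleftrightarrow> max_degree V E = card V - 1"
    using qtR_number_eq_3_iff_universal max_degree_eq_iff_universal[OF V_nonempty] by simp
  moreover have "qtR_number V E = 4 \<longleftrightarrow>
      domination_number V E = 2 \<and> total_domination_number V E = 2"
    using qtR_number_eq_4_iff domination_numbers_eq_2_iff[OF V_nonempty total_dominating_set_V]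
    by simp
  ultimately show ?thesis
    using qtR_number_ge_3 qtR_number_le_card qtR_number_eq_card_iff by simp
qed

end
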